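(* Let $G=(V,E)$ be a directed acyclic graph with real edge weights, let $s_1,t_1,s_2,t_2\in V$, and let $E_\cap=E(s_1,t_1)\cap E(s_2,t_2)$. Let $(P_1,P_2)\in\Pi(s_1,t_1)\times\Pi(s_2,t_2)$ and let $x,y\in V$ be such that $x$ precedes $y$ on both $P_1$ and $P_2$. Then all edges of the subpaths $P_1[x,y]$ and $P_2[x,y]$ belong to $E_\cap$.
   Context: $\Pi(x,y)$ is the set of shortest (minimum weight) paths from $x$ to $y$; $E(x,y)$ is the set of edges lying on at least one path in $\Pi(x,y)$. For a path $P$, $x$ precedes $y$ on $P$ if $x=y$ or $x$ appears before $y$; $P[x,y]$ is the subpath from $x$ to $y$. *)

theory Defs
  imports Complex_Main
begin

definition path_edges :: "'a list \<Rightarrow> ('a \<times> 'a) list" where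
  "path_edges p = zip p (tl p)"

definition is_path :: "('a \<times> 'a) set \<Rightarrow> 'a list \<Rightarrow> 'a \<Rightarrow> 'a \<Rightarrow> bool" where
  "is_path E p x y \<longleftrightarrow> p \<noteq> [] \<and> hd p = x \<and> last p = y \<and> set (path_edges p) \<subseteq> E"

definition path_weight :: "('a \<Rightarrow> 'a \<Rightarrow> real) \<Rightarrow> 'a list \<Rightarrow> real" where
  "path_weight w p = sum_list (map (\<lambda>(u,v). w u v) (path_edges p))"

definition shortest_paths :: "('a \<times> 'a) set \<Rightarrow> ('a \<Rightarrow> 'a \<Rightarrow> real) \<Rightarrow> 'a \<Rightarrow> 'a \<Rightarrow> 'a list set" where
  "shortest_paths E w x y =
     {p. is_path E p x y \<and> (\<forall>q. is_path E q x y \<longrightarrow> path_weight w p \<le> path_weight w q)}"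

definition sp_edges :: "('a \<times> 'a) set \<Rightarrow> ('a \<Rightarrow> 'a \<Rightarrow> real) \<Rightarrow> 'a \<Rightarrow> 'a \<Rightarrow> ('a \<times> 'a) set" where
  "sp_edges E w x y = (\<Union>p \<in> shortest_paths E w x y. set (path_edges p))"

definition precedes :: "'a list \<Rightarrow> 'a \<Rightarrow> 'a \<Rightarrow> bool" where
  "precedes P x y \<longleftrightarrow> (\<exists>i j. i \<le> j \<and> j < length P \<and> P ! i = x \<and> P ! j = y)"

text \<open>P[x,y]: the subpath of P from (the first occurrence of) x to (the last occurrence of) y.
  On a DAG paths are simple, so this is the unique subpath.\<close>
definition subpath :: "'a list \<Rightarrow> 'a \<Rightarrow> 'a \<Rightarrow> 'a list" where
  "subpath P x y =
     (let i = LEAST i. i < length P \<and> P ! i = x;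
          j = GREATEST j. j < length P \<and> P ! j = y
      in take (j + 1 - i) (drop i P))"

end

theory Submission
  imports Defs
begin

text \<open>Both subpaths are shortest \<open>x\<close>-\<open>y\<close> paths, since a shortest path
  stays shortest on each of its segments; and replacing a segment of a shortest path by another
  shortest path between the same endpoints keeps the weight, hence yields a shortest path again.
  So each subpath can be spliced into both \<open>P\<^sub>1\<close> and \<open>P\<^sub>2\<close>.\<close>

lemma path_edges_Nil [simp]: "path_edges [] = []"
  and path_edges_singleton [simp]: "path_edges [a] = []"
  and path_edges_Cons_Cons [simp]: "path_edges (a # b # xs) = (a, b) # path_edges (b # xs)"
  by (simp_all add: path_edges_def)

lemma path_edges_append_Cons:
  "path_edges (xs @ y # ys) = path_edges (xs @ [y]) @ path_edges (y # ys)"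
proof (induction xs)
  case Nil
  then show ?case by simp
next
  case (Cons a xs)
  then show ?case by (cases xs) auto
qed

lemma path_edges_splice:
  assumes "S \<noteq> []"
  shows "path_edges (A @ S @ B) = path_edges (A @ [hd S]) @ path_edges S @ path_edges (last S # B)"
proof -
  have "A @ S @ B = A @ hd S # (tl S @ B)" and "hd S # tl S @ B = butlast S @ last S # B"
    and S: "butlast S @ [last S] = S"
    using assms by simp_all
  then show ?thesis
    using path_edges_append_Cons[of A "hd S"] path_edges_append_Cons[of "butlast S" "last S" B]
    by (metis append.assoc)
qed

lemma path_weight_splice:
  assumes "S \<noteq> []"
  shows "path_weight w (A @ S @ B)
    = path_weight w (A @ [hd S]) + path_weight w S + path_weight w (last S # B)"
  unfolding path_weight_def path_edges_splice[OF assms] by simp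

lemma is_path_segment:
  assumes "is_path E (A @ S @ B) s t" "S \<noteq> []"
  shows "is_path E S (hd S) (last S)"
  using assms path_edges_splice[OF assms(2), of A B] by (auto simp: is_path_def)

lemma is_path_splice:
  assumes "is_path E (A @ S @ B) s t" "S \<noteq> []" "is_path E T (hd S) (last S)"
  shows "is_path E (A @ T @ B) s t"
proof -
  have T: "T \<noteq> []" "hd T = hd S" "last T = last S"
    using assms(3) by (simp_all add: is_path_def)
  have "hd (A @ T @ B) = hd (A @ S @ B)" "last (A @ T @ B) = last (A @ S @ B)"
    using assms(2) T by (cases A; cases B rule: rev_cases; simp)+
  then show ?thesis
    using assms path_edges_splice[OF assms(2), of A B] path_edges_splice[OF T(1), of A B] T
    by (auto simp: is_path_def)
qed

lemma shortest_paths_nonempty: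
  "S \<in> shortest_paths E w x y \<Longrightarrow> S \<noteq> [] \<and> hd S = x \<and> last S = y"
  by (simp add: shortest_paths_def is_path_def)

lemma shortest_paths_segment:
  assumes P: "A @ S @ B \<in> shortest_paths E w s t" and "S \<noteq> []"
  shows "S \<in> shortest_paths E w (hd S) (last S)"
proof -
  have "path_weight w S \<le> path_weight w T" if T: "is_path E T (hd S) (last S)" for T
  proof -
    have "is_path E (A @ T @ B) s t"
      using P is_path_splice[OF _ \<open>S \<noteq> []\<close> T] by (simp add: shortest_paths_def)
    then have "path_weight w (A @ S @ B) \<le> path_weight w (A @ T @ B)"
      using P by (simp add: shortest_paths_def)
    moreover have "T \<noteq> []" "hd T = hd S" "last T = last S"
      using T by (simp_all add: is_path_def)
    ultimately show ?thesis
      using path_weight_splice[OF \<open>S \<noteq> []\<close>, of w A B] path_weight_splice[of T w A B] by simp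
  qed
  moreover have "is_path E S (hd S) (last S)"
    using P \<open>S \<noteq> []\<close> is_path_segment by (auto simp: shortest_paths_def)
  ultimately show ?thesis by (simp add: shortest_paths_def)
qed

lemma shortest_paths_splice:
  assumes P: "A @ S @ B \<in> shortest_paths E w s t"
    and S: "S \<in> shortest_paths E w x y" and T: "T \<in> shortest_paths E w x y"
  shows "A @ T @ B \<in> shortest_paths E w s t"
proof -
  have "path_weight w T = path_weight w S"
    using S T by (auto simp: shortest_paths_def intro: order.antisym)
  then have "path_weight w (A @ T @ B) = path_weight w (A @ S @ B)"
    using path_weight_splice[of S w A B] path_weight_splice[of T w A B]
      shortest_paths_nonempty[OF S] shortest_paths_nonempty[OF T] by simp
  moreover have "is_path E (A @ T @ B) s t"
    using P T is_path_splice[of E A S B s t T] shortest_paths_nonempty[OF S]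
    by (simp add: shortest_paths_def)
  ultimately show ?thesis
    using P by (simp add: shortest_paths_def)
qed

lemma shortest_path_edges_subset_sp_edges:
  assumes "A @ S @ B \<in> shortest_paths E w s t"
    and "S \<in> shortest_paths E w x y" "T \<in> shortest_paths E w x y"
  shows "set (path_edges T) \<subseteq> sp_edges E w s t"
proof -
  have "set (path_edges T) \<subseteq> set (path_edges (A @ T @ B))"
    using path_edges_splice[of T A B] shortest_paths_nonempty[OF assms(3)] by auto
  then show ?thesis
    using shortest_paths_splice[OF assms] unfolding sp_edges_def by blast
qed

lemma slice_decomp:
  assumes "i \<le> j" "j < length P"
  defines "S \<equiv> take (j + 1 - i) (drop i P)"
  shows "P = take i P @ S @ drop (j + 1) P" "S \<noteq> []" "hd S = P ! i" "last S = P ! j"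
proof -
  have "drop (j + 1 - i) (drop i P) = drop (j + 1) P"
    using assms(1) by simp
  then show "P = take i P @ S @ drop (j + 1) P"
    unfolding S_def by (metis append_take_drop_id)
  show "S \<noteq> []" "hd S = P ! i" "last S = P ! j"
    using assms by (simp_all add: hd_drop_conv_nth last_conv_nth)
qed

lemma subpath_decomp:
  assumes "precedes P x y"
  obtains A B where "P = A @ subpath P x y @ B" "subpath P x y \<noteq> []"
    "hd (subpath P x y) = x" "last (subpath P x y) = y"
proof -
  obtain i j where ij: "i \<le> j" "j < length P" "P ! i = x" "P ! j = y"
    using assms unfolding precedes_def by blast
  define i0 where "i0 = (LEAST i. i < length P \<and> P ! i = x)"
  define j0 where "j0 = (GREATEST j. j < length P \<and> P ! j = y)"
  have i0: "i0 \<le> i" "P ! i0 = x"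
    using LeastI[of "\<lambda>i. i < length P \<and> P ! i = x" i] Least_le[of "\<lambda>i. i < length P \<and> P ! i = x" i] ij
    unfolding i0_def by auto
  have j0: "j \<le> j0" "j0 < length P" "P ! j0 = y"
    using GreatestI_nat[of "\<lambda>j. j < length P \<and> P ! j = y" j "length P"]
      Greatest_le_nat[of "\<lambda>j. j < length P \<and> P ! j = y" j "length P"] ij
    unfolding j0_def by auto
  have "subpath P x y = take (j0 + 1 - i0) (drop i0 P)"
    unfolding subpath_def i0_def j0_def Let_def ..
  with slice_decomp[of i0 j0 P] i0 j0 ij show ?thesis
    using that by simp
qed

lemma subpath_in_shortest_paths:
  assumes "P \<in> shortest_paths E w s t" "precedes P x y"
  obtains A B where "P = A @ subpath P x y @ B" "subpath P x y \<in> shortest_paths E w x y"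
  using assms shortest_paths_segment by (metis subpath_decomp)

theorem lemma17:
  fixes V :: "'a set" and E :: "('a \<times> 'a) set" and w :: "'a \<Rightarrow> 'a \<Rightarrow> real"
    and s1 t1 s2 t2 x y :: 'a and P1 P2 :: "'a list"
  assumes "finite V" and "E \<subseteq> V \<times> V" and "acyclic E"
    and "s1 \<in> V" "t1 \<in> V" "s2 \<in> V" "t2 \<in> V"
    and "P1 \<in> shortest_paths E w s1 t1" and "P2 \<in> shortest_paths E w s2 t2"
    and "precedes P1 x y" and "precedes P2 x y"
  shows "set (path_edges (subpath P1 x y)) \<union> set (path_edges (subpath P2 x y)) \<subseteq> sp_edges E w s1 t1 \<inter> sp_edges E w s2 t2"
proof -
  obtain A1 B1 where P1: "A1 @ subpath P1 x y @ B1 \<in> shortest_paths E w s1 t1"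
    and S1: "subpath P1 x y \<in> shortest_paths E w x y"
    using subpath_in_shortest_paths[OF assms(8,10)] assms(8) by metis
  obtain A2 B2 where P2: "A2 @ subpath P2 x y @ B2 \<in> shortest_paths E w s2 t2"
    and S2: "subpath P2 x y \<in> shortest_paths E w x y"
    using subpath_in_shortest_paths[OF assms(9,11)] assms(9) by metis
  show ?thesis
    using shortest_path_edges_subset_sp_edges[OF P1 S1 S1] shortest_path_edges_subset_sp_edges[OF P1 S1 S2]
      shortest_path_edges_subset_sp_edges[OF P2 S2 S1] shortest_path_edges_subset_sp_edges[OF P2 S2 S2]
    by blast
qed

end
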